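(* Let $K$ be a field of characteristic zero and $n\ge3$. Let $i\in\{1,3,5,\dots,n-2\}$ if $n$ is odd, or $i\in\{2,4,6,\dots,n-2\}$ if $n$ is even. Then there exists a filiform Lie algebra $\mathfrak{g}$ over $K$ of dimension $n$ with $\chi(\mathfrak{g})=i$.
   Context: A filiform Lie algebra of dimension $n$ is a nilpotent Lie algebra with $\dim\mathfrak{g}^k=n-k$ for $2\le k\le n$ (lower central series $\mathfrak{g}^1=\mathfrak{g}$, $\mathfrak{g}^{k+1}=[\mathfrak{g},\mathfrak{g}^k]$). For $\ell\in\mathfrak{g}^*$, $\mathfrak{g}(\ell)=\{y\in\mathfrak{g}\mid\ell([x,y])=0\ \forall x\in\mathfrak{g}\}$ and $\chi(\mathfrak{g})=\min_{\ell\in\mathfrak{g}^*}\dim\mathfrak{g}(\ell)$. *)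

theory Defs
  imports Complex_Main "HOL-Library.Function_Algebras"
begin

text \<open>An n-dimensional vector space over a field K is modelled (up to isomorphism) by
  the K-valued sequences supported on {0..<n}; a Lie algebra of dimension n over K is
  this space together with a bilinear, alternating bracket satisfying Jacobi.\<close>

definition sc :: "'a::field \<Rightarrow> (nat \<Rightarrow> 'a) \<Rightarrow> (nat \<Rightarrow> 'a)" where
  "sc c x = (\<lambda>i. c * x i)"

definition Vn :: "nat \<Rightarrow> (nat \<Rightarrow> 'a::field) set" where
  "Vn n = {x. \<forall>i\<ge>n. x i = 0}"

definition span_n :: "(nat \<Rightarrow> 'a::field) set \<Rightarrow> (nat \<Rightarrow> 'a) set" where
  "span_n S = Modules.module.span sc S"

definition dim_n :: "(nat \<Rightarrow> 'a::field) set \<Rightarrow> nat" where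
  "dim_n S = Vector_Spaces.vector_space.dim sc S"

definition is_lie_bracket ::
  "nat \<Rightarrow> ((nat \<Rightarrow> 'a::field) \<Rightarrow> (nat \<Rightarrow> 'a) \<Rightarrow> (nat \<Rightarrow> 'a)) \<Rightarrow> bool" where
  "is_lie_bracket n b \<longleftrightarrow>
     (\<forall>x\<in>Vn n. \<forall>y\<in>Vn n. b x y \<in> Vn n) \<and>
     (\<forall>x\<in>Vn n. \<forall>y\<in>Vn n. \<forall>z\<in>Vn n. b (x + y) z = b x z + b y z \<and> b x (y + z) = b x y + b x z) \<and>
     (\<forall>x\<in>Vn n. \<forall>y\<in>Vn n. \<forall>c. b (sc c x) y = sc c (b x y) \<and> b x (sc c y) = sc c (b x y)) \<and>
     (\<forall>x\<in>Vn n. b x x = 0) \<and>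
     (\<forall>x\<in>Vn n. \<forall>y\<in>Vn n. \<forall>z\<in>Vn n. b x (b y z) + b y (b z x) + b z (b x y) = 0)"

fun lcs :: "nat \<Rightarrow> ((nat \<Rightarrow> 'a::field) \<Rightarrow> (nat \<Rightarrow> 'a) \<Rightarrow> (nat \<Rightarrow> 'a)) \<Rightarrow> nat \<Rightarrow> (nat \<Rightarrow> 'a) set" where
  "lcs n b 0 = Vn n"
| "lcs n b (Suc 0) = Vn n"
| "lcs n b (Suc (Suc k)) = span_n {b x y | x y. x \<in> Vn n \<and> y \<in> lcs n b (Suc k)}"

definition nilpotent_lie :: "nat \<Rightarrow> ((nat \<Rightarrow> 'a::field) \<Rightarrow> (nat \<Rightarrow> 'a) \<Rightarrow> (nat \<Rightarrow> 'a)) \<Rightarrow> bool" where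
  "nilpotent_lie n b \<longleftrightarrow> (\<exists>k\<ge>1. lcs n b k = {0})"

definition filiform :: "nat \<Rightarrow> ((nat \<Rightarrow> 'a::field) \<Rightarrow> (nat \<Rightarrow> 'a) \<Rightarrow> (nat \<Rightarrow> 'a)) \<Rightarrow> bool" where
  "filiform n b \<longleftrightarrow> is_lie_bracket n b \<and> nilpotent_lie n b \<and>
     (\<forall>k. 2 \<le> k \<and> k \<le> n \<longrightarrow> dim_n (lcs n b k) = n - k)"

definition lin_functional :: "nat \<Rightarrow> ((nat \<Rightarrow> 'a::field) \<Rightarrow> 'a) \<Rightarrow> bool" where
  "lin_functional n l \<longleftrightarrow>
     (\<forall>x\<in>Vn n. \<forall>y\<in>Vn n. l (x + y) = l x + l y) \<and>
     (\<forall>x\<in>Vn n. \<forall>c. l (sc c x) = c * l x)"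

definition stabilizer :: "nat \<Rightarrow> ((nat \<Rightarrow> 'a::field) \<Rightarrow> (nat \<Rightarrow> 'a) \<Rightarrow> (nat \<Rightarrow> 'a)) \<Rightarrow> ((nat \<Rightarrow> 'a) \<Rightarrow> 'a) \<Rightarrow> (nat \<Rightarrow> 'a) set" where
  "stabilizer n b l = {y \<in> Vn n. \<forall>x\<in>Vn n. l (b x y) = 0}"

definition chi :: "nat \<Rightarrow> ((nat \<Rightarrow> 'a::field) \<Rightarrow> (nat \<Rightarrow> 'a) \<Rightarrow> (nat \<Rightarrow> 'a)) \<Rightarrow> nat" where
  "chi n b = Min {dim_n (stabilizer n b l) | l. lin_functional n l}"

end

theory Submission
  imports Defs "HOL-Library.Disjoint_Sets"
begin

text \<open>Start from the standard filiform algebra L_n, with basis e_0, ..., e_{n-1} and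
  [e_0, e_j] = e_{j+1} for 1 \<le> j \<le> n - 2, and add for an odd T \<le> n - 2 the brackets
  [e_a, e_{T-a}] = (-1)^a e_{n-1} for 0 < a < T. Since T is odd these are alternating, and
  Jacobi reduces to the symmetry of the analogous form for the even number T - 1. The lower
  central series is still g^k = <e_k, ..., e_{n-1}>, so the algebra is filiform.
  A vector y supported on e_T, ..., e_{n-1} satisfies [x, y] = x_0 [e_0, y]; hence for every
  functional l the kernel of y \<mapsto> l([e_0, y]) on that span lies in g(l), and
  dim g(l) \<ge> n - T - 1. For l = e*_{n-1} + e*_{T+1} the brackets with e_1, ..., e_T force
  g(l) back into this kernel, so \<chi> = n - T - 1, which is i for T = n - i - 1.\<close>

section \<open>Coordinate subspaces and kernels of functionals\<close>

interpretation V: vector_space "sc :: 'a::field \<Rightarrow> (nat \<Rightarrow> 'a) \<Rightarrow> (nat \<Rightarrow> 'a)"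
  by unfold_locales (auto simp: sc_def fun_eq_iff algebra_simps)

lemma sc_apply [simp]: "sc c x i = c * x i"
  by (simp add: sc_def)

lemma sum_apply: "(\<Sum>a\<in>A. f a) x = (\<Sum>a\<in>A. f a x)"
  by (induction A rule: infinite_finite_induct) auto

definition unit_vec :: "nat \<Rightarrow> nat \<Rightarrow> 'a::field" where
  "unit_vec j = (\<lambda>i. if i = j then 1 else 0)"

lemma unit_vec_apply [simp]: "unit_vec j i = (if i = j then 1 else 0)"
  by (simp add: unit_vec_def)

lemma card_unit_vec_image: "card ((unit_vec :: nat \<Rightarrow> nat \<Rightarrow> 'a::field) ` A) = card A"
proof (rule card_image)
  show "inj_on (unit_vec :: nat \<Rightarrow> nat \<Rightarrow> 'a) A"
    by (rule inj_onI) (metis unit_vec_apply one_neq_zero)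
qed

lemma independent_if_pivots:
  fixes g :: "nat \<Rightarrow> nat \<Rightarrow> 'a::field"
  assumes pivot: "\<And>j. j \<in> A \<Longrightarrow> g j j = 1"
    and off_pivot: "\<And>j k. j \<in> A \<Longrightarrow> k \<in> A \<Longrightarrow> k \<noteq> j \<Longrightarrow> g k j = 0"
  shows "V.independent (g ` A)"
proof
  assume "V.dependent (g ` A)"
  then obtain t u v where t: "finite t" "t \<subseteq> g ` A" "(\<Sum>w\<in>t. sc (u w) w) = 0"
    and v: "v \<in> t" "u v \<noteq> 0"
    unfolding V.dependent_explicit by blast
  obtain j where j: "j \<in> A" "v = g j" using t(2) v(1) by blast
  have "0 = (\<Sum>w\<in>t. u w * w j)"
    using fun_cong[OF t(3), of j] by (simp add: sum_apply)
  also have "\<dots> = u v * v j + (\<Sum>w\<in>t - {v}. u w * w j)"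
    by (rule sum.remove[OF t(1) v(1)])
  also have "(\<Sum>w\<in>t - {v}. u w * w j) = 0"
  proof (rule sum.neutral, rule ballI)
    fix w assume "w \<in> t - {v}"
    then obtain k where "k \<in> A" "w = g k" "k \<noteq> j" using t(2) j(2) by blast
    then show "u w * w j = 0" using off_pivot[OF j(1)] by simp
  qed
  finally show False using v(2) pivot[OF j(1)] j(2) by simp
qed

lemma independent_unit_vec_image: "V.independent ((unit_vec :: nat \<Rightarrow> nat \<Rightarrow> 'a::field) ` A)"
  by (rule independent_if_pivots) auto

definition tail_space :: "nat \<Rightarrow> nat \<Rightarrow> (nat \<Rightarrow> 'a::field) set" where
  "tail_space n k = {x \<in> Vn n. \<forall>j<k. x j = 0}"

lemma tail_space_0: "tail_space n 0 = Vn n"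
  by (simp add: tail_space_def)

lemma tail_space_self: "tail_space n n = {0}"
  by (auto simp: tail_space_def Vn_def fun_eq_iff) (meson not_le)

lemma subspace_tail_space: "V.subspace (tail_space n k)"
  unfolding V.subspace_def tail_space_def Vn_def by auto

lemma unit_vec_in_tail_space: "k \<le> j \<Longrightarrow> j < n \<Longrightarrow> unit_vec j \<in> tail_space n k"
  by (simp add: tail_space_def Vn_def)

lemma tail_space_eq_sum:
  assumes "x \<in> tail_space n k"
  shows "x = (\<Sum>q\<in>{k..<n}. sc (x q) (unit_vec q))"
proof
  fix i
  have "(\<Sum>q\<in>{k..<n}. sc (x q) (unit_vec q)) i = (\<Sum>q\<in>{k..<n}. if q = i then x q else 0)"
    unfolding sum_apply by (rule sum.cong) auto
  also have "\<dots> = x i"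
    using assms by (auto simp: tail_space_def Vn_def)
  finally show "x i = (\<Sum>q\<in>{k..<n}. sc (x q) (unit_vec q)) i" by simp
qed

lemma tail_space_subset_span: "tail_space n k \<subseteq> V.span (unit_vec ` {k..<n})"
proof
  fix x :: "nat \<Rightarrow> 'a" assume "x \<in> tail_space n k"
  moreover have "(\<Sum>q\<in>{k..<n}. sc (x q) (unit_vec q)) \<in> V.span (unit_vec ` {k..<n})"
    by (intro V.span_sum V.span_scale V.span_base) auto
  ultimately show "x \<in> V.span (unit_vec ` {k..<n})" using tail_space_eq_sum by metis
qed

lemma dim_tail_space: "V.dim (tail_space n k :: (nat \<Rightarrow> 'a::field) set) = n - k"
  by (rule V.dim_unique[OF _ tail_space_subset_span independent_unit_vec_image])
    (auto simp: card_unit_vec_image unit_vec_in_tail_space)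

lemma dim_mono_Vn:
  fixes S T :: "(nat \<Rightarrow> 'a::field) set"
  assumes "S \<subseteq> T" "T \<subseteq> Vn n"
  shows "V.dim S \<le> V.dim T"
proof -
  obtain B where B: "B \<subseteq> S" "V.independent B" "card B = V.dim S"
    by (metis V.basis_exists)
  obtain C where C: "C \<subseteq> T" "V.independent C" "T \<subseteq> V.span C" "card C = V.dim T"
    by (rule V.basis_exists)
  have "C \<subseteq> V.span (unit_vec ` {0..<n})"
    using C(1) assms(2) tail_space_subset_span[of n 0] by (auto simp: tail_space_0)
  then have "finite C"
    using V.independent_span_bound[OF _ C(2)] by blast
  moreover have "B \<subseteq> V.span C" using B(1) assms(1) C(3) by blast
  ultimately show ?thesis
    using V.independent_span_bound[OF _ B(2)] B(3) C(4) by metis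
qed

lemma dim_le_n:
  fixes S :: "(nat \<Rightarrow> 'a::field) set"
  assumes "S \<subseteq> Vn n"
  shows "V.dim S \<le> n"
proof -
  have "V.dim S \<le> V.dim (tail_space n 0 :: (nat \<Rightarrow> 'a) set)"
    using assms by (intro dim_mono_Vn[of _ _ n]) (auto simp: tail_space_0)
  then show ?thesis by (simp add: dim_tail_space)
qed

lemma lin_functional_add:
  "lin_functional n f \<Longrightarrow> x \<in> Vn n \<Longrightarrow> y \<in> Vn n \<Longrightarrow> f (x + y) = f x + f y"
  by (simp add: lin_functional_def)

lemma lin_functional_scale: "lin_functional n f \<Longrightarrow> x \<in> Vn n \<Longrightarrow> f (sc c x) = c * f x"
  by (simp add: lin_functional_def)

lemma lin_functional_0:
  assumes "lin_functional n f"
  shows "f 0 = 0"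
proof -
  have "f (sc 0 0) = 0 * f 0"
    using assms by (rule lin_functional_scale) (simp add: Vn_def)
  then show ?thesis by (simp add: sc_def zero_fun_def)
qed

lemma sum_in_Vn: "(\<And>q. q \<in> F \<Longrightarrow> u q \<in> Vn n) \<Longrightarrow> (\<Sum>q\<in>F. u q) \<in> Vn n"
  by (simp add: Vn_def sum_apply)

lemma lin_functional_sum:
  assumes f: "lin_functional n f" and u: "\<And>q. q \<in> F \<Longrightarrow> u q \<in> Vn n"
  shows "f (\<Sum>q\<in>F. u q) = (\<Sum>q\<in>F. f (u q))"
  using u
proof (induction F rule: infinite_finite_induct)
  case (insert q F)
  have "f (\<Sum>q\<in>insert q F. u q) = f (u q + (\<Sum>q\<in>F. u q))"
    by (simp only: sum.insert[OF insert.hyps])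
  also have "\<dots> = f (u q) + f (\<Sum>q\<in>F. u q)"
    using insert.prems by (intro lin_functional_add[OF f] sum_in_Vn) auto
  also have "\<dots> = f (u q) + (\<Sum>q\<in>F. f (u q))"
    using insert.IH insert.prems by simp
  also have "\<dots> = (\<Sum>q\<in>insert q F. f (u q))"
    by (simp only: sum.insert[OF insert.hyps])
  finally show ?case .
qed (simp_all add: lin_functional_0[OF f])

lemma lin_functional_eq_sum:
  assumes f: "lin_functional n f" and x: "x \<in> tail_space n k"
  shows "f x = (\<Sum>q\<in>{k..<n}. x q * f (unit_vec q))"
proof -
  have "f x = (\<Sum>q\<in>{k..<n}. f (sc (x q) (unit_vec q)))"
    by (subst tail_space_eq_sum[OF x], rule lin_functional_sum[OF f]) (simp add: Vn_def)
  also have "\<dots> = (\<Sum>q\<in>{k..<n}. x q * f (unit_vec q))"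
    using f by (intro sum.cong) (auto simp: lin_functional_def Vn_def)
  finally show ?thesis .
qed

definition kernel_basis_vec :: "((nat \<Rightarrow> 'a::field) \<Rightarrow> 'a) \<Rightarrow> nat \<Rightarrow> nat \<Rightarrow> nat \<Rightarrow> 'a" where
  "kernel_basis_vec f p q = unit_vec q + sc (- (f (unit_vec q) / f (unit_vec p))) (unit_vec p)"

lemma kernel_basis_vec_apply:
  "kernel_basis_vec f p q i
    = (if i = q then 1 else 0) - f (unit_vec q) / f (unit_vec p) * (if i = p then 1 else 0)"
  by (simp add: kernel_basis_vec_def)

lemma kernel_basis_vec_in_kernel:
  assumes f: "lin_functional n f" and p: "t \<le> p" "p < n" "f (unit_vec p) \<noteq> 0"
    and q: "t \<le> q" "q < n" "q \<noteq> p"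
  shows "kernel_basis_vec f p q \<in> {v \<in> tail_space n t. f v = 0}"
proof -
  let ?c = "f (unit_vec q) / f (unit_vec p)"
  have "f (kernel_basis_vec f p q) = f (unit_vec q) + f (sc (- ?c) (unit_vec p))"
    unfolding kernel_basis_vec_def using p q by (intro lin_functional_add[OF f]) (auto simp: Vn_def)
  also have "\<dots> = f (unit_vec q) + (- ?c) * f (unit_vec p)"
    using p by (subst lin_functional_scale[OF f]) (auto simp: Vn_def)
  also have "\<dots> = 0" using p by simp
  finally show ?thesis
    using p q by (auto simp: tail_space_def Vn_def kernel_basis_vec_apply)
qed

lemma kernel_eq_sum_kernel_basis_vec:
  assumes f: "lin_functional n f" and p: "t \<le> p" "p < n" "f (unit_vec p) \<noteq> 0"
    and v: "v \<in> tail_space n t" "f v = 0"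
  shows "v = (\<Sum>q\<in>{t..<n} - {p}. sc (v q) (kernel_basis_vec f p q))"
proof
  fix i
  let ?Q = "{t..<n} - {p}" and ?c = "\<lambda>q. f (unit_vec q) / f (unit_vec p)"
  have "0 = (\<Sum>q\<in>{t..<n}. v q * f (unit_vec q))"
    using v lin_functional_eq_sum[OF f] by simp
  also have "\<dots> = v p * f (unit_vec p) + (\<Sum>q\<in>?Q. v q * f (unit_vec q))"
    using p by (intro sum.remove) auto
  finally have balance: "(\<Sum>q\<in>?Q. v q * f (unit_vec q) / f (unit_vec p)) = - v p"
    using p by (simp add: sum_divide_distrib[symmetric] field_simps eq_neg_iff_add_eq_0)
  have "(\<Sum>q\<in>?Q. sc (v q) (kernel_basis_vec f p q)) i
      = (\<Sum>q\<in>?Q. (if q = i then v q else 0) - (if i = p then v q * ?c q else 0))"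
    unfolding sum_apply by (rule sum.cong) (auto simp: kernel_basis_vec_apply)
  also have "\<dots> = (if i \<in> ?Q then v i else 0) + (if i = p then v p else 0)"
    by (cases "i = p") (simp_all add: sum_subtractf sum_negf balance)
  also have "\<dots> = v i"
    using v(1) p by (auto simp: tail_space_def Vn_def)
  finally show "v i = (\<Sum>q\<in>?Q. sc (v q) (kernel_basis_vec f p q)) i" by simp
qed

lemma dim_kernel_eq:
  assumes f: "lin_functional n f" and p: "t \<le> p" "p < n" "f (unit_vec p) \<noteq> 0"
  shows "V.dim {v \<in> tail_space n t. f v = 0} = n - t - 1"
proof -
  let ?g = "kernel_basis_vec f p" and ?Q = "{t..<n} - {p}"
  have basis_in: "?g ` ?Q \<subseteq> {v \<in> tail_space n t. f v = 0}"
    using kernel_basis_vec_in_kernel[OF f p] by auto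
  have "{v \<in> tail_space n t. f v = 0} \<subseteq> V.span (?g ` ?Q)"
  proof
    fix v assume "v \<in> {v \<in> tail_space n t. f v = 0}"
    then have "v = (\<Sum>q\<in>?Q. sc (v q) (?g q))"
      using kernel_eq_sum_kernel_basis_vec[OF f p] by auto
    also have "\<dots> \<in> V.span (?g ` ?Q)"
      by (intro V.span_sum V.span_scale V.span_base) auto
    finally show "v \<in> V.span (?g ` ?Q)" .
  qed
  moreover have "V.independent (?g ` ?Q)"
    by (rule independent_if_pivots) (auto simp: kernel_basis_vec_apply)
  moreover have "inj_on ?g ?Q"
  proof (rule inj_onI)
    fix a b assume ab: "a \<in> ?Q" "b \<in> ?Q" "?g a = ?g b"
    then have "?g a a = ?g b a" by simp
    then show "a = b" using ab(1) by (auto simp: kernel_basis_vec_apply split: if_splits)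
  qed
  then have "card (?g ` ?Q) = n - t - 1"
    using p by (simp add: card_image)
  ultimately show ?thesis by (intro V.dim_unique[OF basis_in])
qed

lemma dim_kernel_ge:
  fixes f :: "(nat \<Rightarrow> 'a::field) \<Rightarrow> 'a"
  assumes f: "lin_functional n f"
  shows "n - t - 1 \<le> V.dim {v \<in> tail_space n t. f v = 0}"
proof (cases "\<exists>p\<in>{t..<n}. f (unit_vec p) \<noteq> 0")
  case True
  then show ?thesis using dim_kernel_eq[OF f] by auto
next
  case False
  then have "unit_vec ` {t..<n} \<subseteq> {v \<in> tail_space n t. f v = 0}"
    by (auto intro: unit_vec_in_tail_space)
  then have "V.dim (unit_vec ` {t..<n} :: (nat \<Rightarrow> 'a) set) \<le> V.dim {v \<in> tail_space n t. f v = 0}"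
    by (intro dim_mono_Vn[of _ _ n]) (auto simp: tail_space_def)
  then show ?thesis
    by (simp add: V.dim_eq_card_independent independent_unit_vec_image card_unit_vec_image)
qed

section \<open>A family of filiform brackets\<close>

definition twist :: "nat \<Rightarrow> (nat \<Rightarrow> 'a::field) \<Rightarrow> (nat \<Rightarrow> 'a) \<Rightarrow> 'a" where
  "twist T x y = (\<Sum>a\<in>{1..<T}. (-1) ^ a * x a * y (T - a))"

lemma twist_add_left: "twist T (x + y) z = twist T x z + twist T y z"
  by (simp add: twist_def algebra_simps sum.distrib)

lemma twist_add_right: "twist T x (y + z) = twist T x y + twist T x z"
  by (simp add: twist_def algebra_simps sum.distrib)

lemma twist_scale_left: "twist T (sc c x) y = c * twist T x y"
  by (simp add: twist_def sum_distrib_left algebra_simps)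

lemma twist_scale_right: "twist T x (sc c y) = c * twist T x y"
  by (simp add: twist_def sum_distrib_left algebra_simps)

lemma twist_self:
  assumes "odd T"
  shows "twist T x x = 0"
  unfolding twist_def
proof (rule sum_involution_eq_0[where h = "\<lambda>a. T - a"])
  fix a assume a: "a \<in> {1..<T}"
  then have "(-1 :: 'a) ^ (T - a) = - ((-1) ^ a)"
    using assms by (simp add: minus_one_power_iff)
  then show "(-1) ^ (T - a) * x (T - a) * x (T - (T - a)) + (-1) ^ a * x a * x (T - a) = 0"
    using a by simp
  show "T - a \<noteq> a" using a assms by presburger
qed auto

lemma twist_commute:
  assumes "even S"
  shows "twist S x y = twist S y x"
  unfolding twist_def
proof (rule sum.reindex_bij_witness[where i = "\<lambda>a. S - a" and j = "\<lambda>a. S - a"])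
  fix a assume a: "a \<in> {1..<S}"
  then have "(-1 :: 'a) ^ (S - a) = (-1) ^ a"
    using assms by (simp add: minus_one_power_iff)
  then show "(-1) ^ (S - a) * y (S - a) * x (S - (S - a)) = (-1) ^ a * x a * y (S - a)"
    using a by simp
qed auto

lemma twist_unit_vec_left:
  "twist T (unit_vec j) y = (if 1 \<le> j \<and> j < T then (-1) ^ j * y (T - j) else 0)"
proof -
  have "twist T (unit_vec j) y = (\<Sum>a\<in>{1..<T}. if a = j then (-1) ^ j * y (T - j) else 0)"
    unfolding twist_def by (rule sum.cong) auto
  then show ?thesis by simp
qed

lemma twist_eq_0_if_low_coords_0:
  assumes "\<And>j. 0 < j \<Longrightarrow> j < T \<Longrightarrow> y j = 0"
  shows "twist T x y = 0"
  unfolding twist_def using assms by (intro sum.neutral) auto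

definition twisted_bracket ::
  "nat \<Rightarrow> nat \<Rightarrow> (nat \<Rightarrow> 'a::field) \<Rightarrow> (nat \<Rightarrow> 'a) \<Rightarrow> (nat \<Rightarrow> 'a)" where
  "twisted_bracket n T x y = (\<lambda>k.
     (if 2 \<le> k \<and> k < n then x 0 * y (k - 1) - y 0 * x (k - 1) else 0)
     + (if k = n - 1 then twist T x y else 0))"

text \<open>The e*_{T+1} term detects y_0 through [e_T, y] = -y_0 e_{T+1}; when T + 1 = n - 1 the
  first term already does.\<close>

definition regular_functional :: "nat \<Rightarrow> nat \<Rightarrow> (nat \<Rightarrow> 'a::field) \<Rightarrow> 'a" where
  "regular_functional n T w = w (n - 1) + (if T + 1 < n - 1 then w (T + 1) else 0)"

context
  fixes n T :: nat
  assumes n_ge_3: "3 \<le> n" and odd_T: "odd T" and T_le: "T \<le> n - 2"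
begin

abbreviation br :: "(nat \<Rightarrow> 'a::field) \<Rightarrow> (nat \<Rightarrow> 'a) \<Rightarrow> (nat \<Rightarrow> 'a)" where
  "br \<equiv> twisted_bracket n T"

lemma bracket_in_Vn: "br x y \<in> Vn n"
  using n_ge_3 by (auto simp: Vn_def twisted_bracket_def)

lemma bracket_add_left: "br (x + y) z = br x z + br y z"
  by (auto simp: fun_eq_iff twisted_bracket_def twist_add_left algebra_simps)

lemma bracket_add_right: "br x (y + z) = br x y + br x z"
  by (auto simp: fun_eq_iff twisted_bracket_def twist_add_right algebra_simps)

lemma bracket_scale_left: "br (sc c x) y = sc c (br x y)"
  by (auto simp: fun_eq_iff twisted_bracket_def twist_scale_left algebra_simps)

lemma bracket_scale_right: "br x (sc c y) = sc c (br x y)"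
  by (auto simp: fun_eq_iff twisted_bracket_def twist_scale_right algebra_simps)

lemma bracket_self: "br x x = 0"
  using twist_self[OF odd_T] by (auto simp: fun_eq_iff twisted_bracket_def)

lemma twist_bracket: "twist T x (br y z) = y 0 * twist (T - 1) x z - z 0 * twist (T - 1) x y"
proof -
  have "twist T x (br y z) = (\<Sum>a\<in>{1..<T}. if a < T - 1 then
      (-1) ^ a * x a * (y 0 * z (T - 1 - a) - z 0 * y (T - 1 - a)) else 0)"
    unfolding twist_def
  proof (rule sum.cong)
    fix a assume a: "a \<in> {1..<T}"
    then have "T - a \<noteq> n - 1" "T - a < n" "T - a - 1 = T - 1 - a" "2 \<le> T - a \<longleftrightarrow> a < T - 1"
      using T_le n_ge_3 by auto
    then show "(-1) ^ a * x a * br y z (T - a) = (if a < T - 1 then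
      (-1) ^ a * x a * (y 0 * z (T - 1 - a) - z 0 * y (T - 1 - a)) else 0)"
      by (simp add: twisted_bracket_def)
  qed simp
  also have "\<dots> = (\<Sum>a\<in>{a \<in> {1..<T}. a < T - 1}.
      (-1) ^ a * x a * (y 0 * z (T - 1 - a) - z 0 * y (T - 1 - a)))"
    by (rule sum.inter_filter[symmetric]) simp
  also have "{a \<in> {1..<T}. a < T - 1} = {1..<T - 1}"
    by auto
  finally show ?thesis
    by (simp add: twist_def sum_distrib_left sum_subtractf[symmetric] algebra_simps)
qed

lemma bracket_bracket: "br x (br y z) = (\<lambda>k.
   (if 2 \<le> k \<and> k < n then x 0 * (if 3 \<le> k then y 0 * z (k - 2) - z 0 * y (k - 2) else 0) else 0)
   + (if k = n - 1 then y 0 * twist (T - 1) x z - z 0 * twist (T - 1) x y else 0))"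
proof
  fix k
  have "br y z 0 = 0" using n_ge_3 by (simp add: twisted_bracket_def)
  moreover have "br y z (k - 1) = (if 3 \<le> k then y 0 * z (k - 2) - z 0 * y (k - 2) else 0)"
    if "2 \<le> k" "k < n"
  proof -
    have "k - 1 \<noteq> n - 1" "k - 1 < n" "k - 1 - 1 = k - 2" "2 \<le> k - 1 \<longleftrightarrow> 3 \<le> k"
      using that by auto
    then show ?thesis by (simp add: twisted_bracket_def)
  qed
  moreover have "k \<noteq> n - 1" if "\<not> (2 \<le> k \<and> k < n)" using that n_ge_3 by auto
  ultimately show "br x (br y z) k = (if 2 \<le> k \<and> k < n then x 0 * (if 3 \<le> k
      then y 0 * z (k - 2) - z 0 * y (k - 2) else 0) else 0)
      + (if k = n - 1 then y 0 * twist (T - 1) x z - z 0 * twist (T - 1) x y else 0)"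
    unfolding twisted_bracket_def[of n T x] twist_bracket by auto
qed

lemma bracket_jacobi: "br x (br y z) + br y (br z x) + br z (br x y) = 0"
proof
  have "even (T - 1)" using odd_T by simp
  note commute = twist_commute[OF this]
  fix k
  show "(br x (br y z) + br y (br z x) + br z (br x y)) k = 0 k"
    unfolding plus_fun_apply zero_fun_apply bracket_bracket commute[of z y] commute[of y x]
      commute[of x z]
    by (simp add: algebra_simps)
qed

lemma is_lie_bracket_twisted: "is_lie_bracket n br"
  unfolding is_lie_bracket_def
  by (simp add: bracket_in_Vn bracket_add_left bracket_add_right bracket_scale_left
      bracket_scale_right bracket_self bracket_jacobi)

lemma bracket_in_tail_space_2: "br x y \<in> tail_space n 2"
  using bracket_in_Vn n_ge_3 by (auto simp: tail_space_def twisted_bracket_def)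

lemma bracket_in_tail_space_Suc:
  assumes k: "2 \<le> k" and y: "y \<in> tail_space n k"
  shows "br x y \<in> tail_space n (Suc k)"
proof -
  have y_low: "y j = 0" if "j < k" for j
    using y that by (simp add: tail_space_def)
  have "br x y j = 0" if j: "j < Suc k" for j
  proof -
    have "y 0 = 0" "y (j - 1) = 0"
      using y_low k j by auto
    moreover have "twist T x y = 0" if "j = n - 1"
      using that j T_le n_ge_3 by (intro twist_eq_0_if_low_coords_0 y_low) auto
    ultimately show ?thesis
      using k by (auto simp: twisted_bracket_def)
  qed
  then show ?thesis using bracket_in_Vn by (simp add: tail_space_def)
qed

lemma bracket_unit_vec_0:
  assumes "1 \<le> j" "Suc j < n"
  shows "br (unit_vec 0) (unit_vec j) = unit_vec (Suc j)"
  using assms by (auto simp: fun_eq_iff twisted_bracket_def twist_unit_vec_left)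

lemma span_brackets_eq_tail_space:
  assumes k: "1 \<le> k"
    and brackets: "\<And>x y. y \<in> Y \<Longrightarrow> br x y \<in> tail_space n (Suc k)"
    and unit_vecs: "\<And>j. k \<le> j \<Longrightarrow> Suc j < n \<Longrightarrow> unit_vec j \<in> Y"
  shows "V.span {br x y | x y. x \<in> Vn n \<and> y \<in> Y} = tail_space n (Suc k)"
proof
  show "V.span {br x y | x y. x \<in> Vn n \<and> y \<in> Y} \<subseteq> tail_space n (Suc k)"
    using brackets by (intro V.span_minimal subspace_tail_space) blast
  have "unit_vec ` {Suc k..<n} \<subseteq> {br x y | x y. x \<in> Vn n \<and> y \<in> Y}"
  proof
    fix v :: "nat \<Rightarrow> 'a" assume "v \<in> unit_vec ` {Suc k..<n}"
    then obtain q where q: "Suc k \<le> q" "q < n" "v = unit_vec q" by auto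
    define j where "j = q - 1"
    have j: "k \<le> j" "Suc j < n" "v = unit_vec (Suc j)"
      using q by (auto simp: j_def)
    then have "v = br (unit_vec 0) (unit_vec j)"
      using k by (simp add: bracket_unit_vec_0)
    moreover have "unit_vec 0 \<in> Vn n" using n_ge_3 by (simp add: Vn_def)
    ultimately show "v \<in> {br x y | x y. x \<in> Vn n \<and> y \<in> Y}"
      using unit_vecs j by blast
  qed
  then have "V.span (unit_vec ` {Suc k..<n}) \<subseteq> V.span {br x y | x y. x \<in> Vn n \<and> y \<in> Y}"
    by (rule V.span_mono)
  then show "tail_space n (Suc k) \<subseteq> V.span {br x y | x y. x \<in> Vn n \<and> y \<in> Y}"
    by (rule order_trans[OF tail_space_subset_span])
qed

lemma lcs_twisted_bracket: "lcs n br (Suc (Suc m)) = tail_space n (Suc (Suc m))"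
proof (induction m)
  case 0
  have "V.span {br x y | x y. x \<in> Vn n \<and> y \<in> Vn n} = tail_space n (Suc 1)"
    using bracket_in_tail_space_2[unfolded numeral_2_eq_2]
    by (intro span_brackets_eq_tail_space) (auto simp: Vn_def)
  then show ?case by (simp add: span_n_def)
next
  case (Suc m)
  have "V.span {br x y | x y. x \<in> Vn n \<and> y \<in> tail_space n (Suc (Suc m))}
      = tail_space n (Suc (Suc (Suc m)))"
    by (intro span_brackets_eq_tail_space bracket_in_tail_space_Suc)
      (auto simp: tail_space_def Vn_def)
  then show ?case using Suc.IH by (simp add: span_n_def)
qed

theorem filiform_twisted_bracket: "filiform n br"
proof -
  have lcs_eq: "lcs n br k = tail_space n k" if "2 \<le> k" for k
    using that lcs_twisted_bracket[of "k - 2"] by (simp add: numeral_2_eq_2 Suc_diff_Suc)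
  have "lcs n br n = {0}"
    using lcs_eq[of n] n_ge_3 by (simp add: tail_space_self)
  then have "nilpotent_lie n br"
    unfolding nilpotent_lie_def using n_ge_3 by (intro exI[of _ n]) auto
  then show ?thesis
    using is_lie_bracket_twisted by (simp add: filiform_def dim_n_def lcs_eq dim_tail_space)
qed

subsection \<open>The index\<close>

lemma T_ge_1: "1 \<le> T"
  using odd_pos[OF odd_T] by simp

lemma bracket_with_tail_space_T:
  assumes v: "v \<in> tail_space n T"
  shows "br x v = sc (x 0) (br (unit_vec 0) v)"
proof -
  have v_low: "v j = 0" if "j < T" for j
    using v that by (simp add: tail_space_def)
  then have "twist T w v = 0" for w
    by (intro twist_eq_0_if_low_coords_0)
  then show ?thesis
    using v_low[of 0] T_ge_1 by (auto simp: fun_eq_iff twisted_bracket_def)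
qed

lemma lin_functional_bracket_unit_vec_0:
  "lin_functional n l \<Longrightarrow> lin_functional n (\<lambda>v. l (br (unit_vec 0) v))"
  by (simp add: lin_functional_def bracket_add_right bracket_scale_right bracket_in_Vn)

lemma kernel_subset_stabilizer:
  assumes l: "lin_functional n l"
  shows "{v \<in> tail_space n T. l (br (unit_vec 0) v) = 0} \<subseteq> stabilizer n br l"
proof
  fix v assume "v \<in> {v \<in> tail_space n T. l (br (unit_vec 0) v) = 0}"
  then have v: "v \<in> tail_space n T" "l (br (unit_vec 0) v) = 0" by auto
  have "l (br x v) = 0" for x
  proof -
    have "l (br x v) = l (sc (x 0) (br (unit_vec 0) v))"
      using bracket_with_tail_space_T[OF v(1)] by (rule arg_cong)
    also have "\<dots> = x 0 * l (br (unit_vec 0) v)"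
      by (rule lin_functional_scale[OF l bracket_in_Vn])
    finally show ?thesis using v(2) by simp
  qed
  then show "v \<in> stabilizer n br l"
    using v by (simp add: stabilizer_def tail_space_def)
qed

lemma dim_stabilizer_ge:
  assumes l: "lin_functional n l"
  shows "n - T - 1 \<le> dim_n (stabilizer n br l)"
proof -
  have "n - T - 1 \<le> V.dim {v \<in> tail_space n T. l (br (unit_vec 0) v) = 0}"
    by (rule dim_kernel_ge[OF lin_functional_bracket_unit_vec_0[OF l]])
  also have "\<dots> \<le> V.dim (stabilizer n br l)"
    by (rule dim_mono_Vn[OF kernel_subset_stabilizer[OF l]]) (auto simp: stabilizer_def)
  finally show ?thesis by (simp add: dim_n_def)
qed

lemma lin_functional_regular: "lin_functional n (regular_functional n T)"
  by (simp add: lin_functional_def regular_functional_def algebra_simps)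

lemma bracket_unit_vec_T: "br (unit_vec T) y = sc (- y 0) (unit_vec (T + 1))"
  using T_ge_1 T_le n_ge_3 by (auto simp: fun_eq_iff twisted_bracket_def twist_unit_vec_left)

lemma bracket_unit_vec_below_T:
  assumes "1 \<le> j" "j < T" "y 0 = 0"
  shows "br (unit_vec j) y = sc ((-1) ^ j * y (T - j)) (unit_vec (n - 1))"
  using assms T_le by (auto simp: fun_eq_iff twisted_bracket_def twist_unit_vec_left)

lemma stabilizer_regular_subset_kernel:
  "stabilizer n br (regular_functional n T)
    \<subseteq> {v \<in> tail_space n T. regular_functional n T (br (unit_vec 0) v) = 0}"
proof
  fix y assume "y \<in> stabilizer n br (regular_functional n T)"
  then have y: "y \<in> Vn n" and stab: "\<And>x. x \<in> Vn n \<Longrightarrow> regular_functional n T (br x y) = 0"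
    by (auto simp: stabilizer_def)
  have "regular_functional n T (br (unit_vec T) y) = - y 0"
    using T_le n_ge_3 by (auto simp: bracket_unit_vec_T regular_functional_def)
  then have y0: "y 0 = 0"
    using stab[of "unit_vec T"] T_le n_ge_3 by (simp add: Vn_def)
  have "y k = 0" if k: "0 < k" "k < T" for k
  proof -
    have "regular_functional n T (br (unit_vec (T - k)) y) = (-1) ^ (T - k) * y k"
      using k y0 n_ge_3 by (simp add: bracket_unit_vec_below_T regular_functional_def)
    then show ?thesis
      using stab[of "unit_vec (T - k)"] k T_le by (simp add: Vn_def)
  qed
  moreover have "regular_functional n T (br (unit_vec 0) y) = 0"
    using stab n_ge_3 by (simp add: Vn_def)
  ultimately show "y \<in> {v \<in> tail_space n T. regular_functional n T (br (unit_vec 0) v) = 0}"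
    using y y0 by (auto simp: tail_space_def) (metis gr0I)
qed

lemma dim_stabilizer_regular:
  "dim_n (stabilizer n (br :: (nat \<Rightarrow> 'a::field) \<Rightarrow> _) (regular_functional n T)) = n - T - 1"
proof -
  let ?f = "\<lambda>v :: nat \<Rightarrow> 'a. regular_functional n T (br (unit_vec 0) v)"
  have "1 \<le> n - 2" "Suc (n - 2) < n" "Suc (n - 2) = n - 1"
    using n_ge_3 by auto
  then have "br (unit_vec 0) (unit_vec (n - 2)) = (unit_vec (n - 1) :: nat \<Rightarrow> 'a)"
    by (metis bracket_unit_vec_0)
  then have "?f (unit_vec (n - 2)) \<noteq> 0"
    using n_ge_3 by (simp add: regular_functional_def)
  then have "V.dim {v \<in> tail_space n T. ?f v = 0} = n - T - 1"
    using T_le n_ge_3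
    by (intro dim_kernel_eq[OF lin_functional_bracket_unit_vec_0[OF lin_functional_regular]]) auto
  moreover have "V.dim (stabilizer n br (regular_functional n T) :: (nat \<Rightarrow> 'a) set)
      \<le> V.dim {v \<in> tail_space n T. ?f v = 0}"
    by (rule dim_mono_Vn[OF stabilizer_regular_subset_kernel]) (auto simp: tail_space_def)
  moreover have "n - T - 1 \<le> dim_n (stabilizer n br (regular_functional n T) :: (nat \<Rightarrow> 'a) set)"
    by (rule dim_stabilizer_ge[OF lin_functional_regular])
  ultimately show ?thesis
    by (simp add: dim_n_def)
qed

theorem chi_twisted_bracket: "chi n (br :: (nat \<Rightarrow> 'a::field) \<Rightarrow> _) = n - T - 1"
  unfolding chi_def
proof (rule Min_eqI)
  let ?A = "{dim_n (stabilizer n br l) | l. lin_functional n (l :: (nat \<Rightarrow> 'a) \<Rightarrow> 'a)}"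
  have "dim_n (stabilizer n br l) \<le> n" for l :: "(nat \<Rightarrow> 'a) \<Rightarrow> 'a"
    unfolding dim_n_def by (rule dim_le_n) (auto simp: stabilizer_def)
  then have "?A \<subseteq> {..n}" by auto
  then show "finite ?A" by (rule finite_subset) simp
  show "n - T - 1 \<le> d" if "d \<in> ?A" for d
    using that dim_stabilizer_ge by auto
  show "n - T - 1 \<in> ?A"
    unfolding mem_Collect_eq
    by (intro exI[of _ "regular_functional n T"] conjI)
      (simp_all add: dim_stabilizer_regular lin_functional_regular)
qed

end

theorem corollary6p8:
  fixes n i :: nat
  assumes "CHAR('a::field) = 0"
    and "n \<ge> 3"
    and "i \<ge> 1" and "i \<le> n - 2" and "even (n - i)"
  shows "\<exists>b :: (nat \<Rightarrow> 'a) \<Rightarrow> (nat \<Rightarrow> 'a) \<Rightarrow> (nat \<Rightarrow> 'a).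
           filiform n b \<and> chi n b = i"
proof -
  define T where "T = n - i - 1"
  have T: "odd T" "T \<le> n - 2" "n - T - 1 = i"
    using assms(2-5) unfolding T_def by presburger+
  show ?thesis
    using filiform_twisted_bracket[OF assms(2) T(1,2)] chi_twisted_bracket[OF assms(2) T(1,2)] T(3)
    by metis
qed

end
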